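(* Let $X$ be a Banach lattice with order continuous norm, let $(S_\lambda)_{\lambda\in\Lambda}$ be a family of convex monotone semigroups on $X$, and let $T$ be a semigroup which is an upper bound of $(S_\lambda)_{\lambda\in\Lambda}$. Then the semigroup envelope $S$ of $(S_\lambda)_{\lambda\in\Lambda}$ exists and is given by $S(t)x=\sup_{\pi\in P_t}J_\pi x$ for all $t\ge0$, $x\in X$. If $T$ is a $C_0$-semigroup and $S_{\lambda_0}$ is a $C_0$-semigroup for some $\lambda_0\in\Lambda$, then $S$ is a $C_0$-semigroup.
   Context: A Banach lattice $X$ has order continuous norm if $\|x_\alpha\|\to 0$ for every net $x_\alpha\downarrow 0$ (then every nonempty subset bounded above has a supremum). An operator $T\colon X\to X$ is convex if $T(\lambda x+(1-\lambda)y)\le\lambda Tx+(1-\lambda)Ty$, monotone if $x\le y\Rightarrow Tx\le Ty$, bounded if $\sup_{\|x\|\le r}\|Tx\|<\infty$ for all $r>0$. A semigroup on $X$ is a family $(S(t))_{t\ge0}$ of bounded operators $X\to X$ with $S(0)=\mathrm{id}$ and $S(t+s)=S(t)S(s)$; it is a $C_0$-semigroup if additionally $S(t)x\to x$ as $t\downarrow0$ for all $x$; convex/monotone if every $S(t)$ is. For semigroups $S,T$ write $S\le T$ if $S(t)x\le T(t)x$ for all $t,x$. $T$ is an upper bound of $(S_\lambda)$ if $T\ge S_\lambda$ for all $\lambda$; the (upper) semigroup envelope is the smallest upper bound. Let $P$ be the set of finite $\pi\subset[0,\infty)$ with $0\in\pi$, $P_t:=\{\pi\in P:\max\pi=t\}$.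 Define $J_hx:=\sup_{\lambda\in\Lambda}S_\lambda(h)x$ for $h>0$ ($J_0=\mathrm{id}$) and for $\pi=\{t_0<\dots<t_m\}$, $t_0=0$, $J_\pi:=J_{t_1-t_0}\cdots J_{t_m-t_{m-1}}$. *)

theory Defs
  imports "HOL-Analysis.Analysis"
begin

definition lat_abs :: "'a::{ordered_real_vector, lattice} \<Rightarrow> 'a" where
  "lat_abs x = sup x (- x)"

definition banach_lattice :: "'a::{banach, ordered_real_vector, lattice} itself \<Rightarrow> bool" where
  "banach_lattice _ \<longleftrightarrow> (\<forall>x y::'a. lat_abs x \<le> lat_abs y \<longrightarrow> norm x \<le> norm y)"

definition is_sup :: "'a::order set \<Rightarrow> 'a \<Rightarrow> bool" where
  "is_sup A s \<longleftrightarrow> (\<forall>a\<in>A. a \<le> s) \<and> (\<forall>u. (\<forall>a\<in>A. a \<le> u) \<longrightarrow> s \<le> u)"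

text \<open>Order continuous norm: for every downward directed net (taken as a downward directed
set D, indexed by itself) decreasing to 0 (i.e. with infimum 0), the norms converge to 0.\<close>
definition order_continuous_norm :: "'a::{banach, ordered_real_vector, lattice} itself \<Rightarrow> bool" where
  "order_continuous_norm _ \<longleftrightarrow>
     (\<forall>D::'a set. D \<noteq> {} \<longrightarrow> (\<forall>x\<in>D. \<forall>y\<in>D. \<exists>z\<in>D. z \<le> x \<and> z \<le> y) \<longrightarrow>
        (\<forall>x\<in>D. 0 \<le> x) \<longrightarrow> (\<forall>u. (\<forall>x\<in>D. u \<le> x) \<longrightarrow> u \<le> 0) \<longrightarrow>
        (\<forall>e>0. \<exists>x0\<in>D. \<forall>x\<in>D. x \<le> x0 \<longrightarrow> norm x < e))"

definition convex_op :: "('a::{ordered_real_vector} \<Rightarrow> 'a) \<Rightarrow> bool" where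
  "convex_op T \<longleftrightarrow> (\<forall>x y. \<forall>l::real. 0 \<le> l \<and> l \<le> 1 \<longrightarrow>
      T (l *\<^sub>R x + (1 - l) *\<^sub>R y) \<le> l *\<^sub>R T x + (1 - l) *\<^sub>R T y)"

definition monotone_op :: "('a::order \<Rightarrow> 'a) \<Rightarrow> bool" where
  "monotone_op T \<longleftrightarrow> (\<forall>x y. x \<le> y \<longrightarrow> T x \<le> T y)"

definition bounded_op :: "('a::real_normed_vector \<Rightarrow> 'a) \<Rightarrow> bool" where
  "bounded_op T \<longleftrightarrow> (\<forall>r>0. \<exists>M. \<forall>x. norm x \<le> r \<longrightarrow> norm (T x) \<le> M)"

text \<open>Semigroups are indexed by real t; only t \<ge> 0 is meaningful.\<close>
definition semigroup :: "(real \<Rightarrow> 'a::real_normed_vector \<Rightarrow> 'a) \<Rightarrow> bool" where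
  "semigroup S \<longleftrightarrow> (\<forall>t\<ge>0. bounded_op (S t)) \<and> S 0 = id \<and>
     (\<forall>t\<ge>0. \<forall>s\<ge>0. S (t + s) = S t \<circ> S s)"

definition C0_semigroup :: "(real \<Rightarrow> 'a::real_normed_vector \<Rightarrow> 'a) \<Rightarrow> bool" where
  "C0_semigroup S \<longleftrightarrow> semigroup S \<and> (\<forall>x. ((\<lambda>t. S t x) \<longlongrightarrow> x) (at_right 0))"

definition convex_semigroup :: "(real \<Rightarrow> 'a::{real_normed_vector, ordered_real_vector} \<Rightarrow> 'a) \<Rightarrow> bool" where
  "convex_semigroup S \<longleftrightarrow> semigroup S \<and> (\<forall>t\<ge>0. convex_op (S t))"

definition monotone_semigroup :: "(real \<Rightarrow> 'a::{real_normed_vector, order} \<Rightarrow> 'a) \<Rightarrow> bool" where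
  "monotone_semigroup S \<longleftrightarrow> semigroup S \<and> (\<forall>t\<ge>0. monotone_op (S t))"

definition sg_le :: "(real \<Rightarrow> 'a::order \<Rightarrow> 'a) \<Rightarrow> (real \<Rightarrow> 'a \<Rightarrow> 'a) \<Rightarrow> bool" where
  "sg_le S T \<longleftrightarrow> (\<forall>t\<ge>0. \<forall>x. S t x \<le> T t x)"

definition upper_bound_sg ::
  "(real \<Rightarrow> 'a::{real_normed_vector, order} \<Rightarrow> 'a) \<Rightarrow> 'i set \<Rightarrow> ('i \<Rightarrow> real \<Rightarrow> 'a \<Rightarrow> 'a) \<Rightarrow> bool" where
  "upper_bound_sg T \<Lambda> Sl \<longleftrightarrow> semigroup T \<and> (\<forall>l\<in>\<Lambda>. sg_le (Sl l) T)"

definition semigroup_envelope ::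
  "(real \<Rightarrow> 'a::{real_normed_vector, order} \<Rightarrow> 'a) \<Rightarrow> 'i set \<Rightarrow> ('i \<Rightarrow> real \<Rightarrow> 'a \<Rightarrow> 'a) \<Rightarrow> bool" where
  "semigroup_envelope S \<Lambda> Sl \<longleftrightarrow> upper_bound_sg S \<Lambda> Sl \<and>
     (\<forall>T. upper_bound_sg T \<Lambda> Sl \<longrightarrow> sg_le S T)"

definition Jh :: "'i set \<Rightarrow> ('i \<Rightarrow> real \<Rightarrow> 'a::order \<Rightarrow> 'a) \<Rightarrow> real \<Rightarrow> 'a \<Rightarrow> 'a" where
  "Jh \<Lambda> Sl h x = (if h = 0 then x else (THE s. is_sup {Sl l h x | l. l \<in> \<Lambda>} s))"

fun Jlist :: "'i set \<Rightarrow> ('i \<Rightarrow> real \<Rightarrow> 'a::order \<Rightarrow> 'a) \<Rightarrow> real list \<Rightarrow> 'a \<Rightarrow> 'a" where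
  "Jlist \<Lambda> Sl (a # b # rest) = Jh \<Lambda> Sl (b - a) \<circ> Jlist \<Lambda> Sl (b # rest)"
| "Jlist \<Lambda> Sl _ = id"

definition Jpi :: "'i set \<Rightarrow> ('i \<Rightarrow> real \<Rightarrow> 'a::order \<Rightarrow> 'a) \<Rightarrow> real set \<Rightarrow> 'a \<Rightarrow> 'a" where
  "Jpi \<Lambda> Sl \<pi> = Jlist \<Lambda> Sl (sorted_list_of_set \<pi>)"

definition partitions :: "real \<Rightarrow> real set set" where
  "partitions t = {\<pi>. finite \<pi> \<and> 0 \<in> \<pi> \<and> \<pi> \<subseteq> {0..} \<and> Max \<pi> = t}"

end

theory Submission
  imports Defs
begin

text \<open>Order continuity of the norm gives suprema of bounded sets and puts the supremum of a
  directed set into the norm closure of that set. So \<open>J\<^sub>h\<close> exists (dominated by \<open>T\<close>), and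
  since \<open>J\<^bsub>h+k\<^esub> \<le> J\<^sub>h J\<^sub>k\<close> and \<open>J\<^sub>h\<close> is monotone, refining a partition increases \<open>J\<^sub>\<pi>\<close>; the
  values \<open>J\<^sub>\<pi> x\<close>, \<open>\<pi> \<in> P\<^sub>t\<close>, therefore form a directed set bounded by \<open>T(t) x\<close>, whose
  supremum defines \<open>S(t) x\<close>. Every upper bound of the family dominates all \<open>J\<^sub>\<pi>\<close>, hence \<open>S\<close>.
  For the semigroup law, \<open>S(t+s) \<le> S(t) S(s)\<close> by inserting \<open>t\<close> into partitions of \<open>[0, t+s]\<close>;
  conversely each \<open>J\<^sub>\<pi>\<close> is convex and bounded, hence norm continuous, and \<open>S(s) x\<close> is a norm
  limit of values \<open>J\<^sub>\<pi> x\<close>. Strong continuity follows by squeezing \<open>S(t) x\<close> between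
  \<open>S\<^bsub>\<lambda>\<^sub>0\<^esub>(t) x\<close> and \<open>T(t) x\<close>.\<close>

section \<open>Banach lattices\<close>

lemma lat_abs_nonneg: "0 \<le> lat_abs (x::'a::{ordered_real_vector, lattice})"
proof -
  have "x + - x \<le> lat_abs x + lat_abs x"
    unfolding lat_abs_def by (intro add_mono sup_ge1 sup_ge2)
  then have "0 \<le> (1/2::real) *\<^sub>R (lat_abs x + lat_abs x)"
    by (intro scaleR_nonneg_nonneg) simp_all
  moreover have "lat_abs x + lat_abs x = (2::real) *\<^sub>R lat_abs x" by (simp add: scaleR_2)
  ultimately show ?thesis by simp
qed

lemma lat_abs_of_nonneg: "0 \<le> (x::'a::{ordered_real_vector, lattice}) \<Longrightarrow> lat_abs x = x"
  unfolding lat_abs_def by (rule sup_absorb1) (meson neg_le_0_iff_le order.trans)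

lemma le_lat_abs: "x \<le> lat_abs (x::'a::{ordered_real_vector, lattice})" "- x \<le> lat_abs x"
  unfolding lat_abs_def by auto

lemma norm_lat_abs:
  assumes "banach_lattice TYPE('a::{banach, ordered_real_vector, lattice})"
  shows "norm (lat_abs (x::'a)) = norm x"
proof -
  have "lat_abs (lat_abs x) = lat_abs x" by (simp add: lat_abs_of_nonneg lat_abs_nonneg)
  with assms show ?thesis unfolding banach_lattice_def by (metis order_refl antisym)
qed

lemma norm_mono_nonneg:
  assumes "banach_lattice TYPE('a::{banach, ordered_real_vector, lattice})"
    and "0 \<le> (x::'a)" "x \<le> y"
  shows "norm x \<le> norm y"
proof -
  have "lat_abs x \<le> lat_abs y"
    using assms(2,3) order.trans[OF assms(2,3)] by (simp add: lat_abs_of_nonneg)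
  with assms(1) show ?thesis unfolding banach_lattice_def by blast
qed

lemma norm_between_le:
  assumes bl: "banach_lattice TYPE('a::{banach, ordered_real_vector, lattice})"
    and "(a::'a) \<le> s" "s \<le> b"
  shows "norm s \<le> norm a + norm b"
proof -
  have "s \<le> lat_abs a + lat_abs b"
    using lat_abs_nonneg order.trans[OF assms(3) le_lat_abs(1)] by (rule add_increasing)
  moreover have "- s \<le> lat_abs a + lat_abs b"
  proof -
    have "- s \<le> - a" using assms(2) by simp
    then have "- s \<le> lat_abs a" using le_lat_abs(2) by (rule order.trans)
    then show ?thesis by (rule add_increasing2[OF lat_abs_nonneg])
  qed
  moreover have "lat_abs (lat_abs a + lat_abs b) = lat_abs a + lat_abs b"
    by (simp add: lat_abs_of_nonneg lat_abs_nonneg)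
  ultimately have "lat_abs s \<le> lat_abs (lat_abs a + lat_abs b)"
    by (simp add: lat_abs_def)
  then have "norm s \<le> norm (lat_abs a + lat_abs b)"
    using bl unfolding banach_lattice_def by blast
  also have "\<dots> \<le> norm a + norm b"
    using norm_triangle_ineq[of "lat_abs a" "lat_abs b"] by (simp add: norm_lat_abs[OF bl])
  finally show ?thesis .
qed

lemma closed_nonneg_cone:
  assumes bl: "banach_lattice TYPE('a::{banach, ordered_real_vector, lattice})"
  shows "closed {x::'a. 0 \<le> x}"
  unfolding closure_subset_eq[symmetric]
proof
  fix x :: 'a
  assume "x \<in> closure {x. 0 \<le> x}"
  then have approx: "\<exists>y. 0 \<le> y \<and> norm (x - y) < e" if "e > 0" for e
    using that by (auto simp: closure_approachable dist_norm norm_minus_commute)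
  have small: "norm (inf x 0) < e" if e: "e > 0" for e
  proof -
    obtain y where y: "0 \<le> y" "norm (x - y) < e" using approx[OF e] by blast
    have "- lat_abs (x - y) \<le> x - y" using le_lat_abs(2)[of "x - y"] by (simp add: minus_le_iff)
    also have "x - y \<le> x" using y(1) by simp
    finally have "- lat_abs (x - y) \<le> inf x 0" using lat_abs_nonneg[of "x - y"] by simp
    then have "norm (inf x 0) \<le> norm (- lat_abs (x - y)) + norm (0::'a)"
      by (rule norm_between_le[OF bl]) simp
    then show ?thesis using y(2) by (simp add: norm_lat_abs[OF bl])
  qed
  have "norm (inf x 0) = 0"
    using small[of "norm (inf x 0)"] by (metis less_irrefl norm_ge_zero order.order_iff_strict)
  then show "x \<in> {x. 0 \<le> x}" by (simp add: le_iff_inf inf_commute)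
qed

lemma closed_atMost_banach_lattice:
  assumes "banach_lattice TYPE('a::{banach, ordered_real_vector, lattice})"
  shows "closed {..u::'a}"
proof -
  have "{..u::'a} = (\<lambda>x. u - x) -` {x. 0 \<le> x}" by auto
  then show ?thesis
    by (simp only:) (intro closed_vimage closed_nonneg_cone[OF assms] continuous_intros)
qed

lemma tendsto_le_banach_lattice:
  assumes bl: "banach_lattice TYPE('a::{banach, ordered_real_vector, lattice})"
    and "F \<noteq> bot" "(f \<longlongrightarrow> (l::'a)) F" "(g \<longlongrightarrow> m) F" "eventually (\<lambda>x. f x \<le> g x) F"
  shows "l \<le> m"
proof -
  have "eventually (\<lambda>x. g x - f x \<in> {x. 0 \<le> x}) F"
    using assms(5) by (auto elim: eventually_mono)
  then have "m - l \<in> {x. 0 \<le> x}"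
    using Lim_in_closed_set[OF closed_nonneg_cone[OF bl] _ assms(2) tendsto_diff[OF assms(4,3)]]
    by blast
  then show ?thesis by simp
qed

lemma banach_lattice_archimedean:
  assumes bl: "banach_lattice TYPE('a::{banach, ordered_real_vector, lattice})"
    and bound: "\<And>n::nat. real n *\<^sub>R w \<le> (c::'a)"
  shows "w \<le> 0"
proof (rule tendsto_le_banach_lattice[OF bl trivial_limit_sequentially tendsto_const])
  show "(\<lambda>n. inverse (real (Suc n)) *\<^sub>R c) \<longlonglongrightarrow> 0"
    using tendsto_scaleR[OF LIMSEQ_inverse_real_of_nat tendsto_const[of c]] by simp
  show "\<forall>\<^sub>F n in sequentially. w \<le> inverse (real (Suc n)) *\<^sub>R c"
  proof (intro always_eventually allI)
    fix n
    have "inverse (real (Suc n)) *\<^sub>R (real (Suc n) *\<^sub>R w) \<le> inverse (real (Suc n)) *\<^sub>R c"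
      using bound[of "Suc n"] by (intro scaleR_left_mono) auto
    then show "w \<le> inverse (real (Suc n)) *\<^sub>R c" by simp
  qed
qed

section \<open>Suprema in order continuous Banach lattices\<close>

definition directed :: "'a::order set \<Rightarrow> bool" where
  "directed A \<longleftrightarrow> (\<forall>a\<in>A. \<forall>b\<in>A. \<exists>c\<in>A. a \<le> c \<and> b \<le> c)"

lemma is_sup_unique: "is_sup A s \<Longrightarrow> is_sup A s' \<Longrightarrow> s = (s'::'a::order)"
  unfolding is_sup_def by (meson order.antisym)

lemma the_is_sup: "is_sup A s \<Longrightarrow> (THE s. is_sup A s) = (s::'a::order)"
  by (blast intro: the_equality is_sup_unique)

lemma le_zero_if_le_upper_bound_gaps:
  fixes A :: "'a::{banach, ordered_real_vector, lattice} set"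
  assumes bl: "banach_lattice TYPE('a)" and a1: "a1 \<in> A" and u1: "\<forall>b\<in>A. b \<le> u1"
    and below: "\<And>u a. \<forall>b\<in>A. b \<le> u \<Longrightarrow> a \<in> A \<Longrightarrow> w \<le> u - a"
  shows "w \<le> 0"
proof -
  have shift: "\<forall>b\<in>A. b \<le> u - w" if "\<forall>b\<in>A. b \<le> u" for u
    using below[OF that] by (simp add: le_diff_eq add.commute)
  have "\<forall>b\<in>A. b \<le> u1 - real n *\<^sub>R w" for n
  proof (induction n)
    case (Suc n)
    have "u1 - real (Suc n) *\<^sub>R w = (u1 - real n *\<^sub>R w) - w"
      by (simp add: algebra_simps)
    then show ?case using shift[OF Suc] by (simp only:)
  qed (simp add: u1)
  then have "real n *\<^sub>R w \<le> u1 - a1" for n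
    using a1 by (simp add: le_diff_eq add.commute)
  then show "w \<le> 0" by (rule banach_lattice_archimedean[OF bl])
qed

text \<open>The gaps \<open>u - a\<close> between upper bounds \<open>u\<close> and elements \<open>a\<close> of a directed set form a
  downward directed set with infimum \<open>0\<close>; order continuity makes them small in norm.\<close>

lemma order_continuous_directed_gap:
  fixes A :: "'a::{banach, ordered_real_vector, lattice} set"
  assumes bl: "banach_lattice TYPE('a)" and oc: "order_continuous_norm TYPE('a)"
    and ne: "A \<noteq> {}" and dir: "directed A" and bdd: "\<forall>a\<in>A. a \<le> u1" and e: "e > 0"
  shows "\<exists>a\<in>A. \<exists>u. (\<forall>b\<in>A. b \<le> u) \<and> norm (u - a) < e"
proof -
  define U where "U = {u. \<forall>a\<in>A. a \<le> u}"
  define D where "D = {u - a | u a. u \<in> U \<and> a \<in> A}"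
  obtain a1 where a1: "a1 \<in> A" using ne by blast
  have D_ne: "D \<noteq> {}" using bdd a1 unfolding D_def U_def by blast
  have D_dir: "\<forall>x\<in>D. \<forall>y\<in>D. \<exists>z\<in>D. z \<le> x \<and> z \<le> y"
  proof (intro ballI)
    fix x y assume "x \<in> D" "y \<in> D"
    then obtain u a u' a' where xy: "x = u - a" "y = u' - a'" "u \<in> U" "a \<in> A" "u' \<in> U" "a' \<in> A"
      unfolding D_def by blast
    obtain c where c: "c \<in> A" "a \<le> c" "a' \<le> c" using dir xy unfolding directed_def by blast
    have "inf u u' \<in> U" using xy unfolding U_def by (auto intro: le_infI)
    then have "inf u u' - c \<in> D" using c unfolding D_def by blast
    moreover have "inf u u' - c \<le> u - a" "inf u u' - c \<le> u' - a'"
      by (intro diff_mono; simp add: c)+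
    ultimately show "\<exists>z\<in>D. z \<le> x \<and> z \<le> y" using xy by blast
  qed
  have D_pos: "\<forall>x\<in>D. 0 \<le> x" unfolding D_def U_def by auto
  have D_inf: "\<forall>w. (\<forall>x\<in>D. w \<le> x) \<longrightarrow> w \<le> 0"
    using le_zero_if_le_upper_bound_gaps[OF bl a1 bdd] unfolding D_def U_def by blast
  have "\<forall>e>0. \<exists>x0\<in>D. \<forall>x\<in>D. x \<le> x0 \<longrightarrow> norm x < e"
    using oc D_ne D_dir D_pos D_inf unfolding order_continuous_norm_def by (elim allE[of _ D] impE)
  then obtain x0 where "x0 \<in> D" "norm x0 < e" using e by blast
  then obtain u a where "u \<in> U" "a \<in> A" "norm (u - a) < e" unfolding D_def by blast
  then show ?thesis unfolding U_def by blast
qed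

lemma is_sup_if_tendsto_bounds:
  fixes A :: "'a::{banach, ordered_real_vector, lattice} set"
  assumes bl: "banach_lattice TYPE('a)"
    and aA: "\<And>n. a n \<in> A" and ub: "\<And>n b. b \<in> A \<Longrightarrow> b \<le> u n"
    and lim_a: "a \<longlonglongrightarrow> s" and lim_u: "u \<longlonglongrightarrow> s"
  shows "is_sup A s"
  unfolding is_sup_def
proof (intro conjI ballI allI impI)
  fix b assume "b \<in> A"
  then show "b \<le> s"
    using ub by (intro tendsto_le_banach_lattice[OF bl trivial_limit_sequentially tendsto_const lim_u])
      simp
next
  fix v assume "\<forall>b\<in>A. b \<le> v"
  then show "s \<le> v"
    using aA by (intro tendsto_le_banach_lattice[OF bl trivial_limit_sequentially lim_a tendsto_const])
      simp
qed

text \<open>No directedness is needed here: \<open>a\<^sub>m - a\<^sub>n\<close> lies between \<open>-(u\<^sub>m - a\<^sub>m)\<close> and \<open>u\<^sub>n - a\<^sub>n\<close>,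
  so \<open>(a\<^sub>n)\<close> is Cauchy.\<close>

lemma sup_exists_if_gaps_tendsto_zero:
  fixes A :: "'a::{banach, ordered_real_vector, lattice} set"
  assumes bl: "banach_lattice TYPE('a)"
    and aA: "\<And>n. a n \<in> A" and ub: "\<And>n b. b \<in> A \<Longrightarrow> b \<le> u n"
    and gaps: "(\<lambda>n. norm (u n - a n)) \<longlonglongrightarrow> 0"
  shows "\<exists>s. is_sup A s"
proof -
  have close: "norm (a m - a n) \<le> norm (u m - a m) + norm (u n - a n)" for m n
  proof -
    have "- (u m - a m) \<le> a m - a n" "a m - a n \<le> u n - a n"
      using ub[OF aA[of n], of m] ub[OF aA[of m], of n] by simp_all
    then have "norm (a m - a n) \<le> norm (- (u m - a m)) + norm (u n - a n)"
      by (rule norm_between_le[OF bl])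
    then show ?thesis by (simp only: norm_minus_cancel)
  qed
  have "Cauchy a"
  proof (rule CauchyI)
    fix e :: real assume "e > 0"
    then obtain M where "\<forall>n\<ge>M. norm (norm (u n - a n) - 0) < e / 2"
      using LIMSEQ_D[OF gaps, of "e / 2"] by auto
    then have M: "\<And>n. n \<ge> M \<Longrightarrow> norm (u n - a n) < e / 2" by simp
    show "\<exists>M. \<forall>m\<ge>M. \<forall>n\<ge>M. norm (a m - a n) < e"
    proof (intro exI[of _ M] allI impI)
      fix m n assume "M \<le> m" "M \<le> n"
      then show "norm (a m - a n) < e" using close[of m n] M[of m] M[of n] by linarith
    qed
  qed
  then obtain s where lim: "a \<longlonglongrightarrow> s" using Cauchy_convergent convergent_def by blast
  have "(\<lambda>n. u n - a n) \<longlonglongrightarrow> 0" using gaps by (rule tendsto_norm_zero_cancel)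
  from tendsto_add[OF lim this] have "u \<longlonglongrightarrow> s" by simp
  then show ?thesis using is_sup_if_tendsto_bounds[where a = a and u = u, OF bl aA ub lim] by blast
qed

lemma sup_exists_if_gaps:
  fixes A :: "'a::{banach, ordered_real_vector, lattice} set"
  assumes bl: "banach_lattice TYPE('a)"
    and gaps: "\<And>e. e > 0 \<Longrightarrow> \<exists>a\<in>A. \<exists>u. (\<forall>b\<in>A. b \<le> u) \<and> norm (u - a) < e"
  shows "\<exists>s. is_sup A s"
proof -
  have "\<forall>n. \<exists>a u. a \<in> A \<and> (\<forall>b\<in>A. b \<le> u) \<and> norm (u - a) < inverse (real (Suc n))"
    using gaps by (simp add: Bex_def)
  from choice[OF this] obtain a where "\<forall>n. \<exists>u. a n \<in> A \<and> (\<forall>b\<in>A. b \<le> u) \<and>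
      norm (u - a n) < inverse (real (Suc n))"
    by blast
  from choice[OF this] obtain u where "\<forall>n. a n \<in> A \<and> (\<forall>b\<in>A. b \<le> u n) \<and>
      norm (u n - a n) < inverse (real (Suc n))"
    by blast
  moreover from this have "(\<lambda>n. norm (u n - a n)) \<longlonglongrightarrow> 0"
    by (intro Lim_null_comparison[OF _ LIMSEQ_inverse_real_of_nat]) (simp add: less_imp_le)
  ultimately show ?thesis
    using sup_exists_if_gaps_tendsto_zero[where a = a and u = u, OF bl] by blast
qed

lemma directed_sup_exists:
  fixes A :: "'a::{banach, ordered_real_vector, lattice} set"
  assumes bl: "banach_lattice TYPE('a)" and oc: "order_continuous_norm TYPE('a)"
    and "A \<noteq> {}" "directed A" "\<forall>a\<in>A. a \<le> u"
  shows "\<exists>s. is_sup A s"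
  using sup_exists_if_gaps[OF bl order_continuous_directed_gap[OF bl oc assms(3-5)]] .

text \<open>A bounded set has the same upper bounds as the directed set of its finite suprema.\<close>

lemma bounded_sup_exists:
  fixes A :: "'a::{banach, ordered_real_vector, lattice} set"
  assumes bl: "banach_lattice TYPE('a)" and oc: "order_continuous_norm TYPE('a)"
    and ne: "A \<noteq> {}" and bdd: "\<forall>a\<in>A. a \<le> u"
  shows "\<exists>s. is_sup A s"
proof -
  define B where "B = {Sup_fin F | F. finite F \<and> F \<noteq> {} \<and> F \<subseteq> A}"
  have sup_B: "b \<le> v" if "b \<in> B" "\<forall>a\<in>A. a \<le> v" for b v
    using that unfolding B_def by (auto intro!: Sup_fin.boundedI)
  have "B \<noteq> {}" using ne unfolding B_def by blast
  moreover have "directed B" unfolding directed_def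
  proof (intro ballI)
    fix x y assume "x \<in> B" "y \<in> B"
    then obtain F G where FG: "x = Sup_fin F" "finite F" "F \<noteq> {}" "F \<subseteq> A"
      "y = Sup_fin G" "finite G" "G \<noteq> {}" "G \<subseteq> A" unfolding B_def by blast
    then have "Sup_fin (F \<union> G) \<in> B" "x \<le> Sup_fin (F \<union> G)" "y \<le> Sup_fin (F \<union> G)"
      unfolding B_def by (auto intro!: Sup_fin.boundedI intro: Sup_fin.coboundedI)
    then show "\<exists>z\<in>B. x \<le> z \<and> y \<le> z" by blast
  qed
  ultimately obtain s where s: "is_sup B s"
    using directed_sup_exists[OF bl oc] sup_B bdd by blast
  have "is_sup A s" unfolding is_sup_def
  proof (intro conjI ballI allI impI)
    fix a assume "a \<in> A"
    then have "Sup_fin {a} \<in> B" unfolding B_def by blast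
    then show "a \<le> s" using s unfolding is_sup_def by simp
  next
    fix v assume "\<forall>a\<in>A. a \<le> v"
    then show "s \<le> v" using s sup_B unfolding is_sup_def by blast
  qed
  then show ?thesis by blast
qed

lemma directed_sup_in_closure:
  fixes A :: "'a::{banach, ordered_real_vector, lattice} set"
  assumes bl: "banach_lattice TYPE('a)" and oc: "order_continuous_norm TYPE('a)"
    and ne: "A \<noteq> {}" and dir: "directed A" and s: "is_sup A s"
  shows "s \<in> closure A"
  unfolding closure_approachable
proof (intro allI impI)
  fix e :: real assume "e > 0"
  have bdd: "\<forall>a\<in>A. a \<le> s" using s unfolding is_sup_def by blast
  obtain a u where a: "a \<in> A" "\<forall>b\<in>A. b \<le> u" "norm (u - a) < e"
    using order_continuous_directed_gap[OF bl oc ne dir bdd \<open>e > 0\<close>] by blast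
  have "s \<le> u" using s a(2) unfolding is_sup_def by blast
  then have "norm (s - a) \<le> norm (u - a)"
    using bdd a(1) by (intro norm_mono_nonneg[OF bl]) auto
  then show "\<exists>a\<in>A. dist a s < e"
    using a by (intro bexI[of _ a]) (simp_all add: dist_norm norm_minus_commute)
qed

section \<open>Convex operators and semigroups\<close>

text \<open>Extend the segment from \<open>x\<close> through \<open>y\<close>, and the one from \<open>y\<close> through \<open>x\<close>, to length one:
  convexity at the two new endpoints \<open>z\<close>, \<open>z'\<close> squeezes \<open>f y - f x\<close> between
  \<open>-d (f z' - f y)\<close> and \<open>d (f z - f x)\<close>, where \<open>d = \<parallel>y - x\<parallel>\<close>.\<close>

lemma convex_op_lipschitz_near:
  fixes f :: "'a::{banach, ordered_real_vector, lattice} \<Rightarrow> 'a"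
  assumes bl: "banach_lattice TYPE('a)" and cv: "convex_op f"
    and M: "\<And>y. norm y \<le> norm x + 2 \<Longrightarrow> norm (f y) \<le> M"
    and xy: "norm (y - x) < 1"
  shows "norm (f y - f x) \<le> 4 * M * norm (y - x)"
proof (cases "y = x")
  case False
  define d where "d = norm (y - x)"
  have d: "0 < d" "d < 1" using xy False unfolding d_def by auto
  define z where "z = x + (1/d) *\<^sub>R (y - x)"
  define z' where "z' = y - (1/d) *\<^sub>R (y - x)"
  have unit: "norm ((1/d) *\<^sub>R (y - x)) = 1" using d unfolding d_def by simp
  have ny: "norm y \<le> norm x + 1" using norm_triangle_ineq2[of y x] xy by linarith
  have "norm z \<le> norm x + 2"
    using norm_triangle_ineq[of x "(1/d) *\<^sub>R (y - x)"] unit unfolding z_def by linarith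
  then have bound_z: "norm (f z) \<le> M" by (rule M)
  have "norm z' \<le> norm x + 2"
    using norm_triangle_ineq4[of y "(1/d) *\<^sub>R (y - x)"] unit ny unfolding z'_def by linarith
  then have bound_z': "norm (f z') \<le> M" by (rule M)
  have bound_x: "norm (f x) \<le> M" and bound_y: "norm (f y) \<le> M" using M ny by simp_all
  have cvx: "f ((1 - d) *\<^sub>R u + d *\<^sub>R v) \<le> (1 - d) *\<^sub>R f u + d *\<^sub>R f v" for u v
  proof -
    have "0 \<le> 1 - d" "1 - d \<le> 1" using d by simp_all
    with cv have "f ((1 - d) *\<^sub>R u + (1 - (1 - d)) *\<^sub>R v)
        \<le> (1 - d) *\<^sub>R f u + (1 - (1 - d)) *\<^sub>R f v"
      unfolding convex_op_def by blast
    then show ?thesis by simp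
  qed
  have "(1 - d) *\<^sub>R x + d *\<^sub>R z = y" using d unfolding z_def by (simp add: algebra_simps)
  then have "f y \<le> (1 - d) *\<^sub>R f x + d *\<^sub>R f z" using cvx[of x z] by simp
  then have up: "f y - f x \<le> d *\<^sub>R (f z - f x)" by (simp add: algebra_simps)
  have "(1 - d) *\<^sub>R y + d *\<^sub>R z' = x" using d unfolding z'_def by (simp add: algebra_simps)
  then have "f x \<le> (1 - d) *\<^sub>R f y + d *\<^sub>R f z'" using cvx[of y z'] by simp
  then have lo: "- (d *\<^sub>R (f z' - f y)) \<le> f y - f x" by (simp add: algebra_simps)
  have "norm (f y - f x) \<le> norm (- (d *\<^sub>R (f z' - f y))) + norm (d *\<^sub>R (f z - f x))"
    by (rule norm_between_le[OF bl lo up])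
  also have "\<dots> = d * norm (f z' - f y) + d * norm (f z - f x)" using d by simp
  also have "\<dots> \<le> d * (2 * M) + d * (2 * M)"
    using norm_triangle_ineq4[of "f z'" "f y"] norm_triangle_ineq4[of "f z" "f x"]
      bound_x bound_y bound_z bound_z' d
    by (intro add_mono mult_left_mono) auto
  finally show ?thesis unfolding d_def by (simp add: algebra_simps)
qed simp

lemma convex_bounded_op_isCont:
  fixes f :: "'a::{banach, ordered_real_vector, lattice} \<Rightarrow> 'a"
  assumes bl: "banach_lattice TYPE('a)" and cv: "convex_op f" and bd: "bounded_op f"
  shows "isCont f x"
proof -
  obtain M where M: "\<And>y. norm y \<le> norm x + 2 \<Longrightarrow> norm (f y) \<le> M"
    using bd unfolding bounded_op_def by (metis add_nonneg_pos norm_ge_zero zero_less_numeral)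
  have "\<forall>\<^sub>F y in at x. norm (f y - f x) \<le> 4 * M * norm (y - x)"
    unfolding eventually_at
    by (intro exI[of _ 1]) (auto simp: dist_norm intro: convex_op_lipschitz_near[OF bl cv M])
  moreover have "((\<lambda>y. 4 * M * norm (y - x)) \<longlongrightarrow> 0) (at x)"
    by (intro tendsto_eq_intros) auto
  ultimately have "((\<lambda>y. f y - f x) \<longlongrightarrow> 0) (at x)"
    by (rule Lim_null_comparison)
  then show ?thesis unfolding continuous_at by (rule LIM_zero_cancel)
qed

lemma semigroup_zero: "semigroup S \<Longrightarrow> S 0 = id"
  unfolding semigroup_def by blast

lemma semigroup_add_apply:
  "semigroup S \<Longrightarrow> 0 \<le> t \<Longrightarrow> 0 \<le> s \<Longrightarrow> S (t + s) x = S t (S s x)"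
  unfolding semigroup_def by (metis comp_apply)

lemma semigroup_bounded: "semigroup S \<Longrightarrow> 0 \<le> t \<Longrightarrow> bounded_op (S t)"
  unfolding semigroup_def by blast

lemma bounded_op_between:
  fixes h :: "'a::{banach, ordered_real_vector, lattice} \<Rightarrow> 'a"
  assumes bl: "banach_lattice TYPE('a)" and "bounded_op f" "bounded_op g"
    and "\<And>x. f x \<le> h x" "\<And>x. h x \<le> g x"
  shows "bounded_op h"
  unfolding bounded_op_def
proof (intro allI impI)
  fix r :: real assume "r > 0"
  then obtain M1 M2 where "\<And>x. norm x \<le> r \<Longrightarrow> norm (f x) \<le> M1"
      "\<And>x. norm x \<le> r \<Longrightarrow> norm (g x) \<le> M2"
    using assms(2,3) unfolding bounded_op_def by meson
  then have "norm x \<le> r \<Longrightarrow> norm (h x) \<le> M1 + M2" for x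
    using norm_between_le[OF bl assms(4,5)] by (meson add_mono order.trans)
  then show "\<exists>M. \<forall>x. norm x \<le> r \<longrightarrow> norm (h x) \<le> M" by blast
qed

lemma upper_bound_sg_le:
  "upper_bound_sg T \<Lambda> Sl \<Longrightarrow> l \<in> \<Lambda> \<Longrightarrow> 0 \<le> t \<Longrightarrow> Sl l t x \<le> T t x"
  unfolding upper_bound_sg_def sg_le_def by blast

lemma upper_bound_sg_semigroup: "upper_bound_sg T \<Lambda> Sl \<Longrightarrow> semigroup T"
  unfolding upper_bound_sg_def by blast

section \<open>Partitions\<close>

lemma partitionsD:
  assumes "\<pi> \<in> partitions t"
  shows "finite \<pi>" "0 \<in> \<pi>" "t \<in> \<pi>" "0 \<le> t" "\<And>x. x \<in> \<pi> \<Longrightarrow> 0 \<le> x \<and> x \<le> t"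
proof -
  show fin: "finite \<pi>" and zero: "0 \<in> \<pi>" using assms unfolding partitions_def by auto
  have max: "Max \<pi> = t" and nonneg: "\<pi> \<subseteq> {0..}" using assms unfolding partitions_def by auto
  show "t \<in> \<pi>" using Max_in[OF fin] zero max by blast
  then show "0 \<le> t" using nonneg by auto
  show "\<And>x. x \<in> \<pi> \<Longrightarrow> 0 \<le> x \<and> x \<le> t" using nonneg max Max_ge[OF fin] by auto
qed

lemma partitionsI:
  assumes "finite \<pi>" "0 \<in> \<pi>" "t \<in> \<pi>" "\<And>x. x \<in> \<pi> \<Longrightarrow> 0 \<le> x \<and> x \<le> t"
  shows "\<pi> \<in> partitions t"
proof -
  have "Max \<pi> = t" using assms by (intro Max_eqI) auto
  then show ?thesis using assms unfolding partitions_def by auto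
qed

lemma sorted_le_last: "sorted L \<Longrightarrow> x \<in> set L \<Longrightarrow> x \<le> last L"
  by (induction L) auto

lemma sorted_list_of_partition:
  assumes "\<pi> \<in> partitions t"
  defines "L \<equiv> sorted_list_of_set \<pi>"
  shows "sorted_wrt (<) L" "set L = \<pi>" "L \<noteq> []" "hd L = 0" "last L = t" "sorted L"
proof -
  note p = partitionsD[OF assms(1)]
  show "sorted_wrt (<) L" "sorted L" unfolding L_def by simp_all
  show set_L: "set L = \<pi>" unfolding L_def using p(1) by simp
  then show ne: "L \<noteq> []" using p(2) by auto
  have "Min \<pi> = 0" using p by (intro Min_eqI) auto
  moreover have "\<pi> \<noteq> {}" using p(2) by blast
  ultimately show "hd L = 0" unfolding L_def by (simp add: sorted_list_of_set_nonempty[OF p(1)])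
  have "last L \<le> t" using p(5) last_in_set[OF ne] set_L by blast
  moreover have "t \<le> last L" using sorted_le_last[OF \<open>sorted L\<close>] p(3) set_L by blast
  ultimately show "last L = t" by simp
qed

lemma partitions_0: "partitions 0 = {{0}}"
proof -
  have "\<pi> = {0}" if "\<pi> \<in> partitions 0" for \<pi> using partitionsD[OF that] by force
  moreover have "{0} \<in> partitions 0" by (rule partitionsI) auto
  ultimately show ?thesis by blast
qed

lemma partitions_two_points: "0 \<le> t \<Longrightarrow> {0, t} \<in> partitions t"
  by (rule partitionsI) auto

lemma partitions_Un: "\<pi> \<in> partitions t \<Longrightarrow> \<pi>' \<in> partitions t \<Longrightarrow> \<pi> \<union> \<pi>' \<in> partitions t"
  using partitionsD[of \<pi> t] partitionsD[of \<pi>' t] by (intro partitionsI) auto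

lemma partitions_insert: "\<pi> \<in> partitions t \<Longrightarrow> 0 \<le> c \<Longrightarrow> c \<le> t \<Longrightarrow> insert c \<pi> \<in> partitions t"
  using partitionsD[of \<pi> t] by (intro partitionsI) auto

lemma partitions_split:
  assumes p: "\<pi> \<in> partitions (t + s)" and t: "t \<in> \<pi>" "0 \<le> t" and s: "0 \<le> s"
  shows "{x\<in>\<pi>. x \<le> t} \<in> partitions t" "(\<lambda>x. x - t) ` {x\<in>\<pi>. t \<le> x} \<in> partitions s"
    "\<pi> = {x\<in>\<pi>. x \<le> t} \<union> (+) t ` ((\<lambda>x. x - t) ` {x\<in>\<pi>. t \<le> x})"
proof -
  note p = partitionsD[OF p]
  show "{x\<in>\<pi>. x \<le> t} \<in> partitions t" using p t by (intro partitionsI) auto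
  have "t + s - t \<in> (\<lambda>x. x - t) ` {x\<in>\<pi>. t \<le> x}" using p(3) s by (intro imageI) auto
  moreover have "t - t \<in> (\<lambda>x. x - t) ` {x\<in>\<pi>. t \<le> x}" using t by (intro imageI) auto
  ultimately show "(\<lambda>x. x - t) ` {x\<in>\<pi>. t \<le> x} \<in> partitions s"
    using p by (intro partitionsI) auto
  show "\<pi> = {x\<in>\<pi>. x \<le> t} \<union> (+) t ` ((\<lambda>x. x - t) ` {x\<in>\<pi>. t \<le> x})"
    by (auto simp: image_image image_iff)
qed

lemma partitions_concat:
  assumes p1: "\<pi>1 \<in> partitions t" and p2: "\<pi>2 \<in> partitions s"
  shows "\<pi>1 \<union> (+) t ` \<pi>2 \<in> partitions (t + s)"
proof (rule partitionsI)
  note p1 = partitionsD[OF p1] and p2 = partitionsD[OF p2]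
  show "finite (\<pi>1 \<union> (+) t ` \<pi>2)" "0 \<in> \<pi>1 \<union> (+) t ` \<pi>2" "t + s \<in> \<pi>1 \<union> (+) t ` \<pi>2"
    using p1(1,2) p2(1,3) by simp_all
  fix x assume "x \<in> \<pi>1 \<union> (+) t ` \<pi>2"
  then show "0 \<le> x \<and> x \<le> t + s" using p1(4,5) p2(4,5) by fastforce
qed

lemma sorted_list_of_partition_concat:
  assumes p1: "\<pi>1 \<in> partitions t" and p2: "\<pi>2 \<in> partitions s"
  shows "sorted_list_of_set (\<pi>1 \<union> (+) t ` \<pi>2)
    = sorted_list_of_set \<pi>1 @ map ((+) t) (tl (sorted_list_of_set \<pi>2))"
proof -
  define L1 where "L1 = sorted_list_of_set \<pi>1"
  define L2 where "L2 = sorted_list_of_set \<pi>2"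
  note l1 = sorted_list_of_partition[OF p1, folded L1_def]
  note l2 = sorted_list_of_partition[OF p2, folded L2_def]
  have L2: "L2 = 0 # tl L2" using l2(3,4) by (cases L2) auto
  then have "sorted_wrt (<) (0 # tl L2)" using l2(1) by simp
  then have tl_pos: "\<forall>z\<in>set (tl L2). 0 < z" and tl_sorted: "sorted_wrt (<) (tl L2)" by simp_all
  have "\<forall>x\<in>set L1. \<forall>y\<in>set (map ((+) t) (tl L2)). x < y"
    using partitionsD(5)[OF p1] l1(2) tl_pos by fastforce
  then have sorted: "sorted_wrt (<) (L1 @ map ((+) t) (tl L2))"
    using l1(1) tl_sorted by (simp add: sorted_wrt_append sorted_wrt_map)
  have "set (L1 @ map ((+) t) (tl L2)) = \<pi>1 \<union> (+) t ` \<pi>2"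
  proof -
    have "(+) t ` \<pi>2 = insert t ((+) t ` set (tl L2))"
      using l2(2) L2 by (metis image_insert list.simps(15) add_0_right)
    then show ?thesis using l1(2) partitionsD(3)[OF p1] by auto
  qed
  then have "sorted_list_of_set (\<pi>1 \<union> (+) t ` \<pi>2)
      = sorted_list_of_set (set (L1 @ map ((+) t) (tl L2)))"
    by simp
  also have "\<dots> = L1 @ map ((+) t) (tl L2)"
    using sorted by (intro sorted_list_of_set.idem_if_sorted_distinct) (auto simp: strict_sorted_iff)
  finally show ?thesis unfolding L1_def L2_def .
qed

section \<open>The semigroup envelope\<close>

locale dominated_semigroup_family =
  fixes Sl :: "'i \<Rightarrow> real \<Rightarrow> 'a::{banach, ordered_real_vector, lattice} \<Rightarrow> 'a"
    and \<Lambda> :: "'i set"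
    and T :: "real \<Rightarrow> 'a \<Rightarrow> 'a"
  assumes bl: "banach_lattice TYPE('a)"
    and oc: "order_continuous_norm TYPE('a)"
    and ne: "\<Lambda> \<noteq> {}"
    and convex_monotone: "\<forall>l\<in>\<Lambda>. convex_semigroup (Sl l) \<and> monotone_semigroup (Sl l)"
    and upper_bound: "upper_bound_sg T \<Lambda> Sl"
begin

abbreviation J where "J \<equiv> Jh \<Lambda> Sl"

abbreviation JL where "JL \<equiv> Jlist \<Lambda> Sl"

lemma Sl_semigroup: "l \<in> \<Lambda> \<Longrightarrow> semigroup (Sl l)"
  using convex_monotone unfolding convex_semigroup_def by blast

lemma Sl_mono: "l \<in> \<Lambda> \<Longrightarrow> 0 \<le> t \<Longrightarrow> x \<le> y \<Longrightarrow> Sl l t x \<le> Sl l t y"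
  using convex_monotone unfolding monotone_semigroup_def monotone_op_def by blast

lemma Sl_convex: "l \<in> \<Lambda> \<Longrightarrow> 0 \<le> t \<Longrightarrow> convex_op (Sl l t)"
  using convex_monotone unfolding convex_semigroup_def by blast

lemma J_zero: "J 0 = id"
  by (rule ext) (simp add: Jh_def)

lemma J_is_sup: "0 < h \<Longrightarrow> is_sup {Sl l h x | l. l \<in> \<Lambda>} (J h x)"
proof -
  assume h: "0 < h"
  have ne': "{Sl l h x | l. l \<in> \<Lambda>} \<noteq> {}" using ne by blast
  have "\<forall>a\<in>{Sl l h x | l. l \<in> \<Lambda>}. a \<le> T h x"
  proof
    fix a assume "a \<in> {Sl l h x | l. l \<in> \<Lambda>}"
    then obtain l where "a = Sl l h x" "l \<in> \<Lambda>" by blast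
    then show "a \<le> T h x" using upper_bound_sg_le[OF upper_bound] h by simp
  qed
  then obtain s where s: "is_sup {Sl l h x | l. l \<in> \<Lambda>} s"
    using bounded_sup_exists[OF bl oc ne'] by blast
  have "J h x = s" unfolding Jh_def using h the_is_sup[OF s] by simp
  then show ?thesis using s by simp
qed

lemma J_least: "0 < h \<Longrightarrow> (\<And>l. l \<in> \<Lambda> \<Longrightarrow> Sl l h x \<le> u) \<Longrightarrow> J h x \<le> u"
  using J_is_sup[of h x] unfolding is_sup_def by blast

lemma Sl_le_J: "l \<in> \<Lambda> \<Longrightarrow> 0 \<le> h \<Longrightarrow> Sl l h x \<le> J h x"
proof (cases "h = 0")
  case True
  assume "l \<in> \<Lambda>"
  then show ?thesis using True semigroup_zero[OF Sl_semigroup] by (simp add: J_zero)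
next
  case False
  assume "l \<in> \<Lambda>" "0 \<le> h"
  then show ?thesis using False J_is_sup[of h x] unfolding is_sup_def by auto
qed

lemma J_le_upper_bound: "upper_bound_sg T' \<Lambda> Sl \<Longrightarrow> 0 \<le> h \<Longrightarrow> J h x \<le> T' h x"
proof (cases "h = 0")
  case True
  assume "upper_bound_sg T' \<Lambda> Sl"
  then have "T' 0 = id" by (rule semigroup_zero[OF upper_bound_sg_semigroup])
  then show ?thesis using True by (simp add: J_zero)
next
  case False
  assume u: "upper_bound_sg T' \<Lambda> Sl" and "0 \<le> h"
  then show ?thesis using False by (intro J_least) (auto intro: upper_bound_sg_le[OF u])
qed

lemma J_mono: "0 \<le> h \<Longrightarrow> x \<le> y \<Longrightarrow> J h x \<le> J h y"
proof (cases "h = 0")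
  case False
  assume "0 \<le> h" "x \<le> y"
  then have h: "0 < h" using False by simp
  show ?thesis
  proof (rule J_least[OF h])
    fix l assume l: "l \<in> \<Lambda>"
    have "Sl l h x \<le> Sl l h y" using Sl_mono[OF l _ \<open>x \<le> y\<close>] h by simp
    also have "\<dots> \<le> J h y" using Sl_le_J[OF l] h by simp
    finally show "Sl l h x \<le> J h y" .
  qed
qed (simp add: J_zero)

lemma J_convex: "0 \<le> h \<Longrightarrow> convex_op (J h)"
proof (cases "h = 0")
  case False
  assume "0 \<le> h"
  then have h: "0 < h" using False by simp
  show ?thesis unfolding convex_op_def
  proof (intro allI impI)
    fix x y and a :: real assume a: "0 \<le> a \<and> a \<le> 1"
    show "J h (a *\<^sub>R x + (1 - a) *\<^sub>R y) \<le> a *\<^sub>R J h x + (1 - a) *\<^sub>R J h y"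
    proof (rule J_least[OF h])
      fix l assume l: "l \<in> \<Lambda>"
      have "Sl l h (a *\<^sub>R x + (1 - a) *\<^sub>R y) \<le> a *\<^sub>R Sl l h x + (1 - a) *\<^sub>R Sl l h y"
        using Sl_convex[OF l] h a unfolding convex_op_def by simp
      also have "\<dots> \<le> a *\<^sub>R J h x + (1 - a) *\<^sub>R J h y"
        using a Sl_le_J[OF l, of h] h by (intro add_mono scaleR_left_mono) auto
      finally show "Sl l h (a *\<^sub>R x + (1 - a) *\<^sub>R y) \<le> a *\<^sub>R J h x + (1 - a) *\<^sub>R J h y" .
    qed
  qed
qed (simp add: J_zero convex_op_def)

lemma J_bounded: "0 \<le> h \<Longrightarrow> bounded_op (J h)"
proof -
  assume h: "0 \<le> h"
  obtain l where l: "l \<in> \<Lambda>" using ne by blast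
  show ?thesis
    using semigroup_bounded[OF Sl_semigroup[OF l] h]
      semigroup_bounded[OF upper_bound_sg_semigroup[OF upper_bound] h]
    by (rule bounded_op_between[OF bl _ _ Sl_le_J[OF l h] J_le_upper_bound[OF upper_bound h]])
qed

lemma J_isCont: "0 \<le> h \<Longrightarrow> isCont (J h) x"
  by (rule convex_bounded_op_isCont[OF bl J_convex J_bounded])

lemma J_add_le: "0 \<le> h \<Longrightarrow> 0 \<le> k \<Longrightarrow> J (h + k) x \<le> J h (J k x)"
proof (cases "h = 0 \<or> k = 0")
  case False
  assume h: "0 \<le> h" and k: "0 \<le> k"
  then have hk: "0 < h + k" using False by simp
  show ?thesis
  proof (rule J_least[OF hk])
    fix l assume l: "l \<in> \<Lambda>"
    have "Sl l (h + k) x = Sl l h (Sl l k x)" by (rule semigroup_add_apply[OF Sl_semigroup[OF l] h k])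
    also have "\<dots> \<le> Sl l h (J k x)" by (rule Sl_mono[OF l h Sl_le_J[OF l k]])
    also have "\<dots> \<le> J h (J k x)" by (rule Sl_le_J[OF l h])
    finally show "Sl l (h + k) x \<le> J h (J k x)" .
  qed
qed (auto simp: J_zero)

lemma Jlist_mono: "sorted L \<Longrightarrow> x \<le> y \<Longrightarrow> JL L x \<le> JL L y"
proof (induction L arbitrary: x y rule: induct_list012)
  case (3 a b rest)
  then have "0 \<le> b - a" "JL (b # rest) x \<le> JL (b # rest) y" by simp_all
  then show ?case by (simp add: J_mono)
qed auto

lemma Jlist_isCont: "sorted L \<Longrightarrow> isCont (JL L) x"
proof (induction L arbitrary: x rule: induct_list012)
  case (3 a b rest)
  then have "isCont (J (b - a) \<circ> JL (b # rest)) x"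
    by (intro continuous_at_compose J_isCont) simp_all
  then show ?case by (simp add: o_def)
qed (simp_all add: id_def)

lemma Jlist_le_upper_bound:
  "upper_bound_sg T' \<Lambda> Sl \<Longrightarrow> sorted L \<Longrightarrow> L \<noteq> [] \<Longrightarrow> JL L x \<le> T' (last L - hd L) x"
proof (induction L arbitrary: x rule: induct_list012)
  case (2 v)
  have "T' 0 = id" by (rule semigroup_zero[OF upper_bound_sg_semigroup[OF "2.prems"(1)]])
  then show ?case by simp
next
  case (3 a b rest)
  have ab: "0 \<le> b - a" using "3.prems"(2) by simp
  have b_last: "0 \<le> last (b # rest) - b" using sorted_le_last[of "b # rest" b] "3.prems"(2) by simp
  have "JL (a # b # rest) x = J (b - a) (JL (b # rest) x)" by simp
  also have "\<dots> \<le> J (b - a) (T' (last (b # rest) - b) x)"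
    using "3.IH"(2) "3.prems" by (intro J_mono[OF ab]) simp_all
  also have "\<dots> \<le> T' (b - a) (T' (last (b # rest) - b) x)"
    by (rule J_le_upper_bound[OF "3.prems"(1) ab])
  also have "\<dots> = T' ((b - a) + (last (b # rest) - b)) x"
    by (rule semigroup_add_apply[OF upper_bound_sg_semigroup[OF "3.prems"(1)] ab b_last, symmetric])
  finally show ?case by simp
qed simp

text \<open>Inserting a point splits a factor \<open>J\<^bsub>h+k\<^esub>\<close> into \<open>J\<^bsub>h\<^esub> J\<^bsub>k\<^esub>\<close>, which is larger.\<close>

lemma Jlist_insort_le:
  "sorted_wrt (<) L \<Longrightarrow> c \<notin> set L \<Longrightarrow> hd L < c \<Longrightarrow> c < last L \<Longrightarrow> JL L x \<le> JL (insort c L) x"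
proof (induction L arbitrary: x rule: induct_list012)
  case (3 a b rest)
  have ab: "a < b" and ac: "a < c" using "3.prems"(1,3) by simp_all
  show ?case
  proof (cases "c < b")
    case True
    have "JL (a # b # rest) x = J ((c - a) + (b - c)) (JL (b # rest) x)" by simp
    also have "\<dots> \<le> J (c - a) (J (b - c) (JL (b # rest) x))"
      by (rule J_add_le) (use ac True in auto)
    also have "\<dots> = JL (insort c (a # b # rest)) x" using ac True by simp
    finally show ?thesis .
  next
    case False
    then have bc: "b < c" using "3.prems"(2) by (simp add: not_less order.order_iff_strict)
    have IH: "JL (b # rest) x \<le> JL (insort c (b # rest)) x"
      using "3.IH"(2) "3.prems"(1,2,4) bc by simp
    have "JL (a # b # rest) x = J (b - a) (JL (b # rest) x)" by simp
    also have "\<dots> \<le> J (b - a) (JL (insort c (b # rest)) x)"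
      using ab IH by (intro J_mono) auto
    also have "\<dots> = JL (insort c (a # b # rest)) x" using ac bc by simp
    finally show ?thesis .
  qed
qed simp_all

lemma Jlist_append: "JL (xs @ a # ys) = JL (xs @ [a]) \<circ> JL (a # ys)"
proof (induction xs)
  case (Cons x xs)
  then show ?case by (cases xs) (simp_all add: fun_eq_iff)
qed simp

lemma Jlist_shift: "JL (map ((+) t) L) = JL L"
  by (induction L rule: induct_list012) (simp_all add: fun_eq_iff)

lemma Jpi_mono: "\<pi> \<in> partitions t \<Longrightarrow> x \<le> y \<Longrightarrow> Jpi \<Lambda> Sl \<pi> x \<le> Jpi \<Lambda> Sl \<pi> y"
  unfolding Jpi_def by (rule Jlist_mono[OF sorted_list_of_partition(6)])

lemma Jpi_isCont: "\<pi> \<in> partitions t \<Longrightarrow> isCont (Jpi \<Lambda> Sl \<pi>) x"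
  unfolding Jpi_def by (rule Jlist_isCont[OF sorted_list_of_partition(6)])

lemma Jpi_le_upper_bound:
  "upper_bound_sg T' \<Lambda> Sl \<Longrightarrow> \<pi> \<in> partitions t \<Longrightarrow> Jpi \<Lambda> Sl \<pi> x \<le> T' t x"
  unfolding Jpi_def
  using Jlist_le_upper_bound[OF _ sorted_list_of_partition(6,3)] sorted_list_of_partition(4,5)
  by fastforce

lemma Jpi_two_points: "0 \<le> t \<Longrightarrow> Jpi \<Lambda> Sl {0, t} = J t"
proof (cases "t = 0")
  case False
  assume "0 \<le> t"
  then have "sorted_list_of_set (set [0, t]) = [0, t]"
    using False by (intro sorted_list_of_set.idem_if_sorted_distinct) auto
  then show ?thesis unfolding Jpi_def by (simp add: fun_eq_iff)
qed (simp add: Jpi_def J_zero)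

lemma Jpi_insert_le:
  assumes p: "\<pi> \<in> partitions t" and c: "0 < c" "c < t"
  shows "Jpi \<Lambda> Sl \<pi> x \<le> Jpi \<Lambda> Sl (insert c \<pi>) x"
proof (cases "c \<in> \<pi>")
  case False
  note l = sorted_list_of_partition[OF p]
  have "JL (sorted_list_of_set \<pi>) x \<le> JL (insort c (sorted_list_of_set \<pi>)) x"
    using l(1) False c by (intro Jlist_insort_le) (simp_all add: l(2,4,5))
  then show ?thesis unfolding Jpi_def using False partitionsD(1)[OF p] by simp
qed (simp add: insert_absorb)

lemma Jpi_refine:
  assumes p: "\<pi> \<in> partitions t" and p': "\<pi>' \<in> partitions t" and sub: "\<pi> \<subseteq> \<pi>'"
  shows "Jpi \<Lambda> Sl \<pi> x \<le> Jpi \<Lambda> Sl \<pi>' x"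
proof -
  have "\<pi> \<union> F \<in> partitions t \<and> Jpi \<Lambda> Sl \<pi> x \<le> Jpi \<Lambda> Sl (\<pi> \<union> F) x"
    if "finite F" "F \<subseteq> {0<..<t}" for F
    using that
  proof (induction F rule: finite_induct)
    case (insert c F)
    then have IH: "\<pi> \<union> F \<in> partitions t" "Jpi \<Lambda> Sl \<pi> x \<le> Jpi \<Lambda> Sl (\<pi> \<union> F) x"
      and c: "0 < c" "c < t" by auto
    have "\<pi> \<union> insert c F = insert c (\<pi> \<union> F)" by auto
    moreover have "insert c (\<pi> \<union> F) \<in> partitions t"
      using partitions_insert[OF IH(1)] c by simp
    moreover have "Jpi \<Lambda> Sl \<pi> x \<le> Jpi \<Lambda> Sl (insert c (\<pi> \<union> F)) x"
      using IH(2) Jpi_insert_le[OF IH(1) c] by (rule order.trans)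
    ultimately show ?case by simp
  qed (simp add: p)
  moreover have "finite (\<pi>' - \<pi>)" "\<pi>' - \<pi> \<subseteq> {0<..<t}"
    using partitionsD[OF p] partitionsD[OF p'] by (auto simp: less_le)
  ultimately have "Jpi \<Lambda> Sl \<pi> x \<le> Jpi \<Lambda> Sl (\<pi> \<union> (\<pi>' - \<pi>)) x" by blast
  moreover have "\<pi> \<union> (\<pi>' - \<pi>) = \<pi>'" using sub by auto
  ultimately show ?thesis by simp
qed

lemma Jpi_concat:
  assumes p1: "\<pi>1 \<in> partitions t" and p2: "\<pi>2 \<in> partitions s"
  shows "Jpi \<Lambda> Sl (\<pi>1 \<union> (+) t ` \<pi>2) x = Jpi \<Lambda> Sl \<pi>1 (Jpi \<Lambda> Sl \<pi>2 x)"
proof -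
  define L1 where "L1 = sorted_list_of_set \<pi>1"
  define L2 where "L2 = sorted_list_of_set \<pi>2"
  note l1 = sorted_list_of_partition[OF p1, folded L1_def]
  note l2 = sorted_list_of_partition[OF p2, folded L2_def]
  have L1: "L1 = butlast L1 @ [t]" using l1(3,5) by (metis append_butlast_last_id)
  have L2: "t # map ((+) t) (tl L2) = map ((+) t) L2" using l2(3,4) by (cases L2) auto
  have "Jpi \<Lambda> Sl (\<pi>1 \<union> (+) t ` \<pi>2) = JL (L1 @ map ((+) t) (tl L2))"
    unfolding Jpi_def sorted_list_of_partition_concat[OF p1 p2] L1_def L2_def ..
  also have "L1 @ map ((+) t) (tl L2) = butlast L1 @ t # map ((+) t) (tl L2)"
    by (subst L1) simp
  also have "JL \<dots> = JL (butlast L1 @ [t]) \<circ> JL (map ((+) t) L2)"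
    unfolding L2[symmetric] by (rule Jlist_append)
  also have "\<dots> = JL L1 \<circ> JL L2"
    unfolding Jlist_shift L1[symmetric] ..
  finally show ?thesis unfolding Jpi_def L1_def L2_def by simp
qed

definition envelope :: "real \<Rightarrow> 'a \<Rightarrow> 'a" where
  "envelope t x = (THE s. is_sup {Jpi \<Lambda> Sl \<pi> x | \<pi>. \<pi> \<in> partitions t} s)"

lemma Jpi_values_directed: "directed {Jpi \<Lambda> Sl \<pi> x | \<pi>. \<pi> \<in> partitions t}"
  unfolding directed_def
proof (intro ballI)
  fix a b
  assume "a \<in> {Jpi \<Lambda> Sl \<pi> x | \<pi>. \<pi> \<in> partitions t}" "b \<in> {Jpi \<Lambda> Sl \<pi> x | \<pi>. \<pi> \<in> partitions t}"
  then obtain \<pi> \<pi>' where p: "a = Jpi \<Lambda> Sl \<pi> x" "\<pi> \<in> partitions t" "b = Jpi \<Lambda> Sl \<pi>' x" "\<pi>' \<in> partitions t"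
    by blast
  have u: "\<pi> \<union> \<pi>' \<in> partitions t" using partitions_Un[OF p(2,4)] .
  have "a \<le> Jpi \<Lambda> Sl (\<pi> \<union> \<pi>') x" "b \<le> Jpi \<Lambda> Sl (\<pi> \<union> \<pi>') x"
    unfolding p(1,3) by (rule Jpi_refine[OF p(2) u], simp, rule Jpi_refine[OF p(4) u], simp)
  then show "\<exists>c\<in>{Jpi \<Lambda> Sl \<pi> x | \<pi>. \<pi> \<in> partitions t}. a \<le> c \<and> b \<le> c" using u by blast
qed

lemma Jpi_values_nonempty: "0 \<le> t \<Longrightarrow> {Jpi \<Lambda> Sl \<pi> x | \<pi>. \<pi> \<in> partitions t} \<noteq> {}"
  using partitions_two_points by blast

lemma envelope_is_sup: "0 \<le> t \<Longrightarrow> is_sup {Jpi \<Lambda> Sl \<pi> x | \<pi>. \<pi> \<in> partitions t} (envelope t x)"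
proof -
  assume t: "0 \<le> t"
  have "\<forall>a\<in>{Jpi \<Lambda> Sl \<pi> x | \<pi>. \<pi> \<in> partitions t}. a \<le> T t x"
  proof
    fix a assume "a \<in> {Jpi \<Lambda> Sl \<pi> x | \<pi>. \<pi> \<in> partitions t}"
    then obtain \<pi> where "a = Jpi \<Lambda> Sl \<pi> x" "\<pi> \<in> partitions t" by blast
    then show "a \<le> T t x" using Jpi_le_upper_bound[OF upper_bound] by simp
  qed
  then obtain s where s: "is_sup {Jpi \<Lambda> Sl \<pi> x | \<pi>. \<pi> \<in> partitions t} s"
    using directed_sup_exists[OF bl oc Jpi_values_nonempty[OF t] Jpi_values_directed] by blast
  then show ?thesis unfolding envelope_def using the_is_sup[OF s] by simp
qed

lemma Jpi_le_envelope: "\<pi> \<in> partitions t \<Longrightarrow> Jpi \<Lambda> Sl \<pi> x \<le> envelope t x"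
  using envelope_is_sup[OF partitionsD(4)] unfolding is_sup_def by blast

lemma envelope_least:
  "0 \<le> t \<Longrightarrow> (\<And>\<pi>. \<pi> \<in> partitions t \<Longrightarrow> Jpi \<Lambda> Sl \<pi> x \<le> u) \<Longrightarrow> envelope t x \<le> u"
  using envelope_is_sup[of t x] unfolding is_sup_def by blast

lemma envelope_le_upper_bound:
  assumes "upper_bound_sg T' \<Lambda> Sl" "0 \<le> t"
  shows "envelope t x \<le> T' t x"
  using assms(2) by (rule envelope_least) (rule Jpi_le_upper_bound[OF assms(1)])

lemma Sl_le_envelope: "l \<in> \<Lambda> \<Longrightarrow> 0 \<le> t \<Longrightarrow> Sl l t x \<le> envelope t x"
  using Sl_le_J Jpi_le_envelope[OF partitions_two_points] Jpi_two_points order.trans by metis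

lemma envelope_zero: "envelope 0 = id"
proof
  fix x
  have "{Jpi \<Lambda> Sl \<pi> x | \<pi>. \<pi> \<in> partitions 0} = {x}"
    unfolding partitions_0 by (simp add: Jpi_def)
  moreover have "is_sup {x} x" unfolding is_sup_def by simp
  ultimately show "envelope 0 x = id x" using envelope_is_sup[of 0 x] is_sup_unique by simp
qed

lemma envelope_bounded: "0 \<le> t \<Longrightarrow> bounded_op (envelope t)"
proof -
  assume t: "0 \<le> t"
  obtain l where l: "l \<in> \<Lambda>" using ne by blast
  show ?thesis
    using semigroup_bounded[OF Sl_semigroup[OF l] t]
      semigroup_bounded[OF upper_bound_sg_semigroup[OF upper_bound] t]
    by (rule bounded_op_between[OF bl _ _ Sl_le_envelope[OF l t] envelope_le_upper_bound[OF upper_bound t]])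
qed

lemma envelope_add_le: "0 \<le> t \<Longrightarrow> 0 \<le> s \<Longrightarrow> envelope (t + s) x \<le> envelope t (envelope s x)"
proof (rule envelope_least)
  assume t: "0 \<le> t" and s: "0 \<le> s"
  then show "0 \<le> t + s" by simp
  fix \<pi> assume p: "\<pi> \<in> partitions (t + s)"
  define \<pi>' where "\<pi>' = insert t \<pi>"
  have p': "\<pi>' \<in> partitions (t + s)" unfolding \<pi>'_def using partitions_insert[OF p t] s by simp
  have "t \<in> \<pi>'" unfolding \<pi>'_def by simp
  note split = partitions_split[OF p' this t s]
  have "Jpi \<Lambda> Sl \<pi> x \<le> Jpi \<Lambda> Sl \<pi>' x" by (rule Jpi_refine[OF p p']) (auto simp: \<pi>'_def)
  also have "\<dots> = Jpi \<Lambda> Sl ({x\<in>\<pi>'. x \<le> t} \<union> (+) t ` ((\<lambda>x. x - t) ` {x\<in>\<pi>'. t \<le> x})) x"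
    using split(3) by (rule arg_cong)
  also have "\<dots> = Jpi \<Lambda> Sl {x\<in>\<pi>'. x \<le> t} (Jpi \<Lambda> Sl ((\<lambda>x. x - t) ` {x\<in>\<pi>'. t \<le> x}) x)"
    by (rule Jpi_concat[OF split(1,2)])
  also have "\<dots> \<le> Jpi \<Lambda> Sl {x\<in>\<pi>'. x \<le> t} (envelope s x)"
    by (rule Jpi_mono[OF split(1) Jpi_le_envelope[OF split(2)]])
  also have "\<dots> \<le> envelope t (envelope s x)"
    by (rule Jpi_le_envelope[OF split(1)])
  finally show "Jpi \<Lambda> Sl \<pi> x \<le> envelope t (envelope s x)" .
qed

lemma envelope_add_ge: "0 \<le> t \<Longrightarrow> 0 \<le> s \<Longrightarrow> envelope t (envelope s x) \<le> envelope (t + s) x"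
proof (rule envelope_least)
  fix \<pi>1 assume p1: "\<pi>1 \<in> partitions t"
  assume "0 \<le> t" and s: "0 \<le> s"
  let ?A = "{Jpi \<Lambda> Sl \<pi> x | \<pi>. \<pi> \<in> partitions s}"
  have "Jpi \<Lambda> Sl \<pi>1 ` closure ?A \<subseteq> {..envelope (t + s) x}"
  proof (rule image_closure_subset)
    show "continuous_on (closure ?A) (Jpi \<Lambda> Sl \<pi>1)"
      using Jpi_isCont[OF p1] by (simp add: continuous_at_imp_continuous_on)
    show "closed {..envelope (t + s) x}" by (rule closed_atMost_banach_lattice[OF bl])
    show "Jpi \<Lambda> Sl \<pi>1 ` ?A \<subseteq> {..envelope (t + s) x}"
      using Jpi_concat[OF p1] Jpi_le_envelope[OF partitions_concat[OF p1]] by auto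
  qed
  moreover have "envelope s x \<in> closure ?A"
    by (rule directed_sup_in_closure[OF bl oc Jpi_values_nonempty[OF s] Jpi_values_directed
          envelope_is_sup[OF s]])
  ultimately show "Jpi \<Lambda> Sl \<pi>1 (envelope s x) \<le> envelope (t + s) x" by auto
qed

lemma envelope_semigroup: "semigroup envelope"
  unfolding semigroup_def
proof (intro conjI allI impI)
  fix t s :: real assume "0 \<le> t" "0 \<le> s"
  then show "envelope (t + s) = envelope t \<circ> envelope s"
    using envelope_add_le envelope_add_ge by (intro ext) (simp add: order.antisym)
qed (simp_all add: envelope_bounded envelope_zero)

lemma envelope_semigroup_envelope: "semigroup_envelope envelope \<Lambda> Sl"
  unfolding semigroup_envelope_def
proof (intro conjI allI impI)
  show "upper_bound_sg envelope \<Lambda> Sl"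
    unfolding upper_bound_sg_def sg_le_def using envelope_semigroup Sl_le_envelope by blast
  fix T' assume "upper_bound_sg T' \<Lambda> Sl"
  then show "sg_le envelope T'" unfolding sg_le_def using envelope_le_upper_bound by blast
qed

lemma envelope_C0:
  assumes C0_T: "C0_semigroup T" and l0: "l0 \<in> \<Lambda>" and C0_S: "C0_semigroup (Sl l0)"
  shows "C0_semigroup envelope"
  unfolding C0_semigroup_def
proof (intro conjI allI envelope_semigroup)
  fix x
  have "((\<lambda>t. T t x - x) \<longlongrightarrow> 0) (at_right 0)" "((\<lambda>t. Sl l0 t x - x) \<longlongrightarrow> 0) (at_right 0)"
    using C0_T C0_S unfolding C0_semigroup_def by (simp_all add: LIM_zero)
  then have bound_lim: "((\<lambda>t. norm (Sl l0 t x - x) + norm (T t x - x)) \<longlongrightarrow> 0) (at_right 0)"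
    using tendsto_add[OF tendsto_norm_zero tendsto_norm_zero] by fastforce
  have "\<forall>\<^sub>F t in at_right 0. norm (envelope t x - x) \<le> norm (Sl l0 t x - x) + norm (T t x - x)"
    using eventually_at_right_less
  proof (rule eventually_mono)
    fix t :: real assume "0 < t"
    then show "norm (envelope t x - x) \<le> norm (Sl l0 t x - x) + norm (T t x - x)"
      using Sl_le_envelope[OF l0] envelope_le_upper_bound[OF upper_bound]
      by (intro norm_between_le[OF bl]) (simp_all add: diff_right_mono)
  qed
  then have "((\<lambda>t. envelope t x - x) \<longlongrightarrow> 0) (at_right 0)"
    using bound_lim by (rule Lim_null_comparison)
  then show "((\<lambda>t. envelope t x) \<longlongrightarrow> x) (at_right 0)" by (rule LIM_zero_cancel)
qed

end

theorem corollary4p4: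
  fixes Sl :: "'i \<Rightarrow> real \<Rightarrow> 'a::{banach, ordered_real_vector, lattice} \<Rightarrow> 'a"
    and \<Lambda> :: "'i set"
    and T :: "real \<Rightarrow> 'a \<Rightarrow> 'a"
  assumes "banach_lattice TYPE('a)"
    and "order_continuous_norm TYPE('a)"
    and "\<Lambda> \<noteq> {}"
    and "\<forall>l\<in>\<Lambda>. convex_semigroup (Sl l) \<and> monotone_semigroup (Sl l)"
    and "upper_bound_sg T \<Lambda> Sl"
  shows "\<exists>S. semigroup_envelope S \<Lambda> Sl
           \<and> (\<forall>t\<ge>0. \<forall>x. is_sup {Jpi \<Lambda> Sl \<pi> x | \<pi>. \<pi> \<in> partitions t} (S t x))
           \<and> ((C0_semigroup T \<and> (\<exists>l0\<in>\<Lambda>. C0_semigroup (Sl l0))) \<longrightarrow> C0_semigroup S)"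
proof -
  interpret dominated_semigroup_family Sl \<Lambda> T
    using assms by unfold_locales
  show ?thesis
    using envelope_semigroup_envelope envelope_is_sup envelope_C0 by blast
qed

end
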